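(* For any group $B$ and any integer $p\ge 2$, $$cw(B\wr C_p)\le \max(1,cw(B)).$$
   Context: $B\wr C_p$ is the permutational wreath product $B^p\rtimes C_p$, where the cyclic group $C_p$ acts on $\{1,\dots,p\}$ by the shift $(1,2,\dots,p)$. The commutator length of $g\in G'$ is the least $n$ such that $g$ is a product of $n$ commutators; the commutator width $cw(G)$ is the maximum of commutator lengths over elements of the derived subgroup $G'$. *)

theory Defs
  imports "HOL-Algebra.Algebra" "HOL-Library.Extended_Nat"
begin

definition commutator :: "('a, 'b) monoid_scheme \<Rightarrow> 'a \<Rightarrow> 'a \<Rightarrow> 'a" where
  "commutator G x y = x \<otimes>\<^bsub>G\<^esub> y \<otimes>\<^bsub>G\<^esub> inv\<^bsub>G\<^esub> x \<otimes>\<^bsub>G\<^esub> inv\<^bsub>G\<^esub> y"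

fun comm_prods :: "('a, 'b) monoid_scheme \<Rightarrow> nat \<Rightarrow> 'a set" where
  "comm_prods G 0 = {\<one>\<^bsub>G\<^esub>}"
| "comm_prods G (Suc n) =
     {c \<otimes>\<^bsub>G\<^esub> commutator G x y | c x y. c \<in> comm_prods G n \<and> x \<in> carrier G \<and> y \<in> carrier G}"

definition comm_length :: "('a, 'b) monoid_scheme \<Rightarrow> 'a \<Rightarrow> nat" where
  "comm_length G g = (LEAST n. g \<in> comm_prods G n)"

definition comm_width :: "('a, 'b) monoid_scheme \<Rightarrow> enat" where
  "comm_width G = (SUP g \<in> derived G (carrier G). enat (comm_length G g))"

text \<open>Permutational wreath product B wr C_p = B^p \<rtimes> C_p, coordinates indexed by
  {0..<p}, C_p = Z/pZ represented by {0..<p}, acting by the cyclic shift: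
  (k . g)(i) = g(i - k mod p).\<close>
definition wreath_cyclic :: "('a, 'b) monoid_scheme \<Rightarrow> nat \<Rightarrow> ((nat \<Rightarrow> 'a) \<times> nat) monoid" where
  "wreath_cyclic B p =
    \<lparr> carrier = ({0..<p} \<rightarrow>\<^sub>E carrier B) \<times> {0..<p},
      monoid.mult = (\<lambda>(f, a) (g, b).
                ((\<lambda>i\<in>{0..<p}. f i \<otimes>\<^bsub>B\<^esub> g ((i + p - a) mod p)), (a + b) mod p)),
      monoid.one = ((\<lambda>i\<in>{0..<p}. \<one>\<^bsub>B\<^esub>), 0) \<rparr>"

end

theory Submission
  imports Defs
begin

(* Both the rotation part and the product of the coordinates modulo B' are homomorphisms from
   W = B wr C_p to abelian groups, so an element of W' has the form (f, 0) with
   f(p-1) ... f(0) in B'.  Conversely, if that product is a commutator [t, b], then (f, 0) is the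
   single commutator [(x, 0), (y, 1)] where x i = f(i) ... f(0) [t, b]^-1 t and y is b at 0 and 1
   elsewhere: the coordinates of the commutator telescope.  If the product is c [t, b] with c a
   product of n - 1 commutators, a conjugate of c is split off in coordinate 0, which leaves an
   element whose product is [t, b]. *)

lemma int_shift_mod:
  fixes a i p :: nat
  assumes "a \<le> p"
  shows "int ((i + p - a) mod p) = (int i - int a) mod int p"
proof -
  have "int (i + p - a) = (int i - int a) + int p" using assms by simp
  then show ?thesis by (simp add: of_nat_mod)
qed

lemma shift_mod_shift_mod:
  fixes a b i p :: nat
  assumes "a < p" "b < p"
  shows "((i + p - a) mod p + p - b) mod p = (i + p - (a + b) mod p) mod p"
proof -
  have "int (((i + p - a) mod p + p - b) mod p) = (int i - int a - int b) mod int p"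
    using assms by (simp add: int_shift_mod mod_diff_left_eq)
  also have "\<dots> = (int i - int ((a + b) mod p)) mod int p"
    by (simp add: of_nat_mod mod_diff_right_eq diff_diff_eq)
  also have "\<dots> = int ((i + p - (a + b) mod p) mod p)"
    using assms by (subst int_shift_mod) auto
  finally show ?thesis by simp
qed

lemma shift_mod_neg:
  fixes a i p :: nat
  assumes "a < p"
  shows "(i + p - (p - a) mod p) mod p = (i + a) mod p"
proof -
  have "int ((i + p - (p - a) mod p) mod p) = (int i - int ((p - a) mod p)) mod int p"
    using assms by (intro int_shift_mod) simp
  also have "\<dots> = (int i - (int p - int a)) mod int p"
  proof -
    have "int ((p - a) mod p) = (int p - int a) mod int p"
      using assms by (simp add: of_nat_mod of_nat_diff)
    then show ?thesis by (simp only: mod_diff_right_eq)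
  qed
  also have "\<dots> = (int i + int a - int p) mod int p"
    by (simp add: algebra_simps)
  also have "\<dots> = int ((i + a) mod p)"
    by (simp add: mod_diff_right_eq[symmetric] of_nat_mod)
  finally show ?thesis by simp
qed

lemma shift_mod_add_cancel: "(a::nat) < p \<Longrightarrow> i < p \<Longrightarrow> ((i + a) mod p + p - a) mod p = i"
proof -
  assume "a < p" "i < p"
  then have "int (((i + a) mod p + p - a) mod p) = (int ((i + a) mod p) - int a) mod int p"
    by (intro int_shift_mod) simp
  also have "\<dots> = int i"
    using \<open>i < p\<close> by (simp add: of_nat_mod mod_diff_left_eq)
  finally show ?thesis by simp
qed

lemma add_mod_shift_cancel: "(a::nat) < p \<Longrightarrow> i < p \<Longrightarrow> ((i + p - a) mod p + a) mod p = i"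
proof -
  assume "a < p" "i < p"
  then have "int (((i + p - a) mod p + a) mod p) = int i"
    by (simp add: int_shift_mod of_nat_mod mod_add_left_eq)
  then show ?thesis by simp
qed

lemma bij_betw_shift_mod: "(a::nat) < p \<Longrightarrow> bij_betw (\<lambda>i. (i + p - a) mod p) {0..<p} {0..<p}"
  by (rule bij_betw_byWitness[where f' = "\<lambda>i. (i + a) mod p"])
     (auto simp: shift_mod_add_cancel add_mod_shift_cancel)

lemma (in group) mult_inv_cancel_left: "x \<in> carrier G \<Longrightarrow> y \<in> carrier G \<Longrightarrow> x \<otimes> (inv x \<otimes> y) = y"
  by (simp add: m_assoc[symmetric])

lemma (in group) inv_mult_cancel_left: "x \<in> carrier G \<Longrightarrow> y \<in> carrier G \<Longrightarrow> inv x \<otimes> (x \<otimes> y) = y"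
  by (simp add: m_assoc[symmetric])

lemma (in group_hom) derived_in_kernel_of_comm_group:
  assumes "comm_group H" "x \<in> derived G (carrier G)"
  shows "h x = \<one>\<^bsub>H\<^esub>"
proof -
  have "h ` derived G (carrier G) = derived H (h ` carrier G)"
    by (simp add: derived_img)
  also have "\<dots> = {\<one>\<^bsub>H\<^esub>}"
    using assms(1) by (simp add: comm_group.derived_eq_singleton image_subsetI)
  finally show ?thesis using assms(2) by blast
qed

context group
begin

lemma comm_prods_carrier: "c \<in> comm_prods G k \<Longrightarrow> c \<in> carrier G"
  by (induction k arbitrary: c) (auto simp: commutator_def)

lemma comm_prods_Suc: "c \<in> comm_prods G k \<Longrightarrow> c \<in> comm_prods G (Suc k)"
proof -
  assume c: "c \<in> comm_prods G k"
  then have "c = c \<otimes> commutator G \<one> \<one>"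
    by (simp add: commutator_def comm_prods_carrier)
  then show ?thesis using c by auto
qed

lemma comm_prods_mono: "k \<le> m \<Longrightarrow> c \<in> comm_prods G k \<Longrightarrow> c \<in> comm_prods G m"
  by (induction m) (auto simp: le_Suc_eq comm_prods_Suc simp del: comm_prods.simps(2))

lemma comm_prods_mult:
  assumes "c \<in> comm_prods G m"
  shows "d \<in> comm_prods G n \<Longrightarrow> c \<otimes> d \<in> comm_prods G (m + n)"
proof (induction n arbitrary: d)
  case 0
  then show ?case using assms comm_prods_carrier by simp
next
  case (Suc n)
  then obtain e x y where
    exy: "d = e \<otimes> commutator G x y" "e \<in> comm_prods G n" "x \<in> carrier G" "y \<in> carrier G"
    by auto
  then have "c \<otimes> d = (c \<otimes> e) \<otimes> commutator G x y"
    using assms comm_prods_carrier by (simp add: commutator_def m_assoc)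
  then show ?case using Suc.IH[OF exy(2)] exy by auto
qed

lemma derived_imp_comm_prods:
  assumes "g \<in> derived G (carrier G)"
  shows "\<exists>k. g \<in> comm_prods G k"
proof -
  have single: "x \<otimes> y \<otimes> inv x \<otimes> inv y \<in> comm_prods G 1"
    if "x \<in> carrier G" "y \<in> carrier G" for x y
    using that by (force simp: commutator_def)
  from assms show ?thesis unfolding derived_def
  proof (induction rule: generate.induct)
    case one
    then show ?case by (metis comm_prods.simps(1) singletonI)
  next
    case (incl h)
    then show ?case using single by blast
  next
    case (inv h)
    then obtain x y where xy: "x \<in> carrier G" "y \<in> carrier G" "h = x \<otimes> y \<otimes> inv x \<otimes> inv y"
      by blast
    then have "inv h = y \<otimes> x \<otimes> inv y \<otimes> inv x"
      by (simp add: inv_mult_group m_assoc)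
    then show ?case using single xy by metis
  next
    case (eng h1 h2)
    then show ?case using comm_prods_mult by blast
  qed
qed

lemma comm_prods_of_comm_width_le:
  assumes "comm_width G \<le> enat n" "g \<in> derived G (carrier G)"
  shows "g \<in> comm_prods G n"
proof -
  have "enat (comm_length G g) \<le> comm_width G"
    unfolding comm_width_def using assms(2) by (rule SUP_upper)
  then have "comm_length G g \<le> n" using assms(1) by (meson enat_ord_simps(1) order_trans)
  moreover have "g \<in> comm_prods G (comm_length G g)"
    unfolding comm_length_def by (rule LeastI_ex) (rule derived_imp_comm_prods[OF assms(2)])
  ultimately show ?thesis by (rule comm_prods_mono)
qed

end

lemma (in group_hom) comm_prods_hom: "c \<in> comm_prods G k \<Longrightarrow> h c \<in> comm_prods H k"
proof (induction k arbitrary: c)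
  case 0
  then show ?case by simp
next
  case (Suc k)
  then obtain d x y where
    dxy: "c = d \<otimes>\<^bsub>G\<^esub> commutator G x y" "d \<in> comm_prods G k" "x \<in> carrier G" "y \<in> carrier G"
    by auto
  then have "h c = h d \<otimes>\<^bsub>H\<^esub> commutator H (h x) (h y)"
    by (simp add: commutator_def hom_inv G.comm_prods_carrier)
  moreover have "h x \<in> carrier H" "h y \<in> carrier H" using dxy by auto
  ultimately show ?case using Suc.IH[OF dxy(2)] by auto
qed

lemma (in group) comm_prods_conj:
  assumes "g \<in> carrier G" "c \<in> comm_prods G k"
  shows "g \<otimes> c \<otimes> inv g \<in> comm_prods G k"
proof -
  have "(\<lambda>x. g \<otimes> x \<otimes> inv g) \<in> hom G G"
    using assms(1) by (intro homI) (simp_all add: m_assoc inv_mult_cancel_left)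
  then have "group_hom G G (\<lambda>x. g \<otimes> x \<otimes> inv g)"
    by (intro group_hom.intro group_hom_axioms.intro is_group)
  then show ?thesis
    using assms(2) by (rule group_hom.comm_prods_hom)
qed

lemma comm_width_le:
  assumes "\<And>g. g \<in> derived G (carrier G) \<Longrightarrow> g \<in> comm_prods G n"
  shows "comm_width G \<le> enat n"
  unfolding comm_width_def
proof (rule SUP_least)
  fix g assume "g \<in> derived G (carrier G)"
  then have "comm_length G g \<le> n"
    unfolding comm_length_def by (intro Least_le assms)
  then show "enat (comm_length G g) \<le> enat n" by simp
qed

primrec desc_prod :: "('a, 'b) monoid_scheme \<Rightarrow> (nat \<Rightarrow> 'a) \<Rightarrow> nat \<Rightarrow> 'a" where
  "desc_prod G f 0 = \<one>\<^bsub>G\<^esub>"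
| "desc_prod G f (Suc k) = f k \<otimes>\<^bsub>G\<^esub> desc_prod G f k"

lemma (in monoid) desc_prod_closed:
  "(\<And>i. i < k \<Longrightarrow> f i \<in> carrier G) \<Longrightarrow> desc_prod G f k \<in> carrier G"
  by (induction k) auto

lemma (in group) desc_prod_update_0:
  assumes "0 < k" "\<And>i. i < k \<Longrightarrow> f i \<in> carrier G" "u \<in> carrier G"
  shows "desc_prod G (f(0 := u)) k = desc_prod G f k \<otimes> inv (f 0) \<otimes> u"
  using assms
proof (induction k rule: nat_induct_non_zero)
  case 1
  then show ?case by (simp add: m_assoc)
next
  case (Suc k)
  then show ?case by (simp add: m_assoc desc_prod_closed)
qed

lemma (in group_hom) desc_prod_hom:
  assumes "comm_group H" "\<And>i. i < k \<Longrightarrow> f i \<in> carrier G"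
  shows "h (desc_prod G f k) = finprod H (\<lambda>i. h (f i)) {0..<k}"
  using assms(2)
proof (induction k)
  interpret H: comm_group H by (rule assms(1))
  case 0
  then show ?case by simp
next
  interpret H: comm_group H by (rule assms(1))
  case (Suc k)
  have "h (desc_prod G f (Suc k)) = h (f k) \<otimes>\<^bsub>H\<^esub> finprod H (\<lambda>i. h (f i)) {0..<k}"
    using Suc by (simp add: G.desc_prod_closed)
  also have "\<dots> = finprod H (\<lambda>i. h (f i)) (insert k {0..<k})"
    using Suc.prems by (simp add: Pi_def)
  also have "insert k {0..<k} = {0..<Suc k}"
    by auto
  finally show ?case .
qed

locale cyclic_wreath = group B for B (structure) +
  fixes p :: nat
  assumes p_pos: "0 < p"
begin

abbreviation W where "W \<equiv> wreath_cyclic B p"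
abbreviation I where "I \<equiv> {0..<p}"

lemma carrier_W: "carrier W = (I \<rightarrow>\<^sub>E carrier B) \<times> I"
  by (simp add: wreath_cyclic_def)

lemma mem_W [simp]: "(f, a) \<in> carrier W \<longleftrightarrow> f \<in> I \<rightarrow>\<^sub>E carrier B \<and> a < p"
  by (simp add: carrier_W)

lemma mult_W: "(f, a) \<otimes>\<^bsub>W\<^esub> (g, b) = ((\<lambda>i\<in>I. f i \<otimes> g ((i + p - a) mod p)), (a + b) mod p)"
  by (simp add: wreath_cyclic_def)

lemma one_W: "\<one>\<^bsub>W\<^esub> = ((\<lambda>i\<in>I. \<one>), 0)"
  by (simp add: wreath_cyclic_def)

lemma PiE_coord_closed [simp]: "f \<in> I \<rightarrow>\<^sub>E carrier B \<Longrightarrow> i < p \<Longrightarrow> f i \<in> carrier B"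
  by auto

lemma mult_W_closed: "v \<in> carrier W \<Longrightarrow> w \<in> carrier W \<Longrightarrow> v \<otimes>\<^bsub>W\<^esub> w \<in> carrier W"
  using p_pos by (cases v, cases w) (auto simp: mult_W)

lemma mult_W_assoc:
  assumes "u \<in> carrier W" "v \<in> carrier W" "w \<in> carrier W"
  shows "u \<otimes>\<^bsub>W\<^esub> v \<otimes>\<^bsub>W\<^esub> w = u \<otimes>\<^bsub>W\<^esub> (v \<otimes>\<^bsub>W\<^esub> w)"
proof -
  obtain f a g b h c where uvw: "u = (f, a)" "v = (g, b)" "w = (h, c)"
    by (cases u, cases v, cases w)
  with assms have f: "f \<in> I \<rightarrow>\<^sub>E carrier B" "a < p" and g: "g \<in> I \<rightarrow>\<^sub>E carrier B" "b < p"
    and h: "h \<in> I \<rightarrow>\<^sub>E carrier B" by auto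
  have "(\<lambda>i\<in>I. (\<lambda>i\<in>I. f i \<otimes> g ((i + p - a) mod p)) i \<otimes> h ((i + p - (a + b) mod p) mod p)) =
        (\<lambda>i\<in>I. f i \<otimes> (\<lambda>i\<in>I. g i \<otimes> h ((i + p - b) mod p)) ((i + p - a) mod p))"
    using f g h p_pos by (intro restrict_ext) (simp add: m_assoc shift_mod_shift_mod)
  moreover have "((a + b) mod p + c) mod p = (a + (b + c) mod p) mod p"
    by (simp add: mod_add_left_eq mod_add_right_eq add.assoc)
  ultimately show ?thesis by (simp add: uvw mult_W)
qed

lemma left_inverse_W:
  assumes "f \<in> I \<rightarrow>\<^sub>E carrier B" "a < p"
  defines "y \<equiv> ((\<lambda>i\<in>I. inv (f ((i + a) mod p))), (p - a) mod p)"
  shows "y \<in> carrier W" "y \<otimes>\<^bsub>W\<^esub> (f, a) = \<one>\<^bsub>W\<^esub>"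
proof -
  show "y \<in> carrier W" using assms p_pos by auto
  have "y \<otimes>\<^bsub>W\<^esub> (f, a) =
      ((\<lambda>i\<in>I. (\<lambda>i\<in>I. inv (f ((i + a) mod p))) i \<otimes> f ((i + p - (p - a) mod p) mod p)),
       ((p - a) mod p + a) mod p)"
    unfolding y_def mult_W ..
  also have "\<dots> = \<one>\<^bsub>W\<^esub>"
    unfolding one_W using assms by (auto intro!: restrict_ext simp: shift_mod_neg mod_add_left_eq)
  finally show "y \<otimes>\<^bsub>W\<^esub> (f, a) = \<one>\<^bsub>W\<^esub>" .
qed

lemma one_W_mult: "x \<in> carrier W \<Longrightarrow> \<one>\<^bsub>W\<^esub> \<otimes>\<^bsub>W\<^esub> x = x"
proof -
  assume "x \<in> carrier W"
  then obtain f a where x: "x = (f, a)" "f \<in> I \<rightarrow>\<^sub>E carrier B" "a < p"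
    by (cases x) auto
  have "(\<lambda>i\<in>I. (\<lambda>i\<in>I. \<one>) i \<otimes> f ((i + p - 0) mod p)) = f"
    using x(2) by (intro ext) (simp add: PiE_arb[of f I])
  then show ?thesis unfolding x(1) one_W mult_W using x(3) by simp
qed

lemma group_W: "group W"
proof (rule groupI)
  fix x assume "x \<in> carrier W"
  then obtain f a where x: "x = (f, a)" "f \<in> I \<rightarrow>\<^sub>E carrier B" "a < p"
    by (cases x) auto
  then show "\<exists>y\<in>carrier W. y \<otimes>\<^bsub>W\<^esub> x = \<one>\<^bsub>W\<^esub>"
    using left_inverse_W[OF x(2,3)] by blast
qed (use p_pos mult_W_closed mult_W_assoc one_W_mult in \<open>auto simp: one_W\<close>)

lemma inv_W:
  assumes "f \<in> I \<rightarrow>\<^sub>E carrier B" "a < p"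
  shows "inv\<^bsub>W\<^esub> (f, a) = ((\<lambda>i\<in>I. inv (f ((i + a) mod p))), (p - a) mod p)"
proof -
  interpret W: group W by (rule group_W)
  show ?thesis
    using left_inverse_W[OF assms] assms by (intro W.inv_equality) simp_all
qed

lemma finprod_coords_hom:
  assumes "comm_group H" "h \<in> hom B H"
  shows "(\<lambda>w. finprod H (\<lambda>i. h (fst w i)) I) \<in> hom W H"
proof -
  interpret H: comm_group H by (rule assms(1))
  interpret h: group_hom B H h
    by (intro group_hom.intro group_hom_axioms.intro) (fact is_group H.is_group assms(2))+
  have hf: "(\<lambda>i. h (f i)) \<in> I \<rightarrow> carrier H" if "f \<in> I \<rightarrow>\<^sub>E carrier B" for f
    using that by auto
  show ?thesis
  proof (rule homI)
    fix w assume "w \<in> carrier W"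
    then show "finprod H (\<lambda>i. h (fst w i)) I \<in> carrier H"
      by (cases w) (auto intro: H.finprod_closed hf)
  next
    fix v w assume "v \<in> carrier W" "w \<in> carrier W"
    then obtain f a g b where v: "v = (f, a)" "f \<in> I \<rightarrow>\<^sub>E carrier B" "a < p"
      and w: "w = (g, b)" "g \<in> I \<rightarrow>\<^sub>E carrier B"
      by (cases v, cases w) auto
    have shifted: "(\<lambda>i. h (g ((i + p - a) mod p))) \<in> I \<rightarrow> carrier H"
      using w p_pos by auto
    have "finprod H (\<lambda>i. h (fst (v \<otimes>\<^bsub>W\<^esub> w) i)) I =
        finprod H (\<lambda>i. h (f i) \<otimes>\<^bsub>H\<^esub> h (g ((i + p - a) mod p))) I"
      using v w p_pos by (intro H.finprod_cong') (auto simp: mult_W)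
    also have "\<dots> = finprod H (\<lambda>i. h (f i)) I \<otimes>\<^bsub>H\<^esub> finprod H (\<lambda>i. h (g ((i + p - a) mod p))) I"
      using hf[OF v(2)] shifted by (rule H.finprod_multf)
    also have "finprod H (\<lambda>i. h (g ((i + p - a) mod p))) I = finprod H (\<lambda>i. h (g i)) I"
      using H.finprod_reindex[of "\<lambda>i. h (g i)" "\<lambda>i. (i + p - a) mod p" I] hf[OF w(2)]
        bij_betw_shift_mod[OF v(3)] by (simp add: bij_betw_def)
    finally show "finprod H (\<lambda>i. h (fst (v \<otimes>\<^bsub>W\<^esub> w) i)) I =
        finprod H (\<lambda>i. h (fst v i)) I \<otimes>\<^bsub>H\<^esub> finprod H (\<lambda>i. h (fst w i)) I"
      using v w by simp
  qed
qed

lemma rotation_hom: "(\<lambda>w. int (snd w)) \<in> hom W (integer_mod_group p)"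
proof (rule homI)
  fix w assume "w \<in> carrier W"
  then show "int (snd w) \<in> carrier (integer_mod_group p)"
    using p_pos by (auto simp: carrier_W carrier_integer_mod_group)
next
  fix v w assume "v \<in> carrier W" "w \<in> carrier W"
  then show "int (snd (v \<otimes>\<^bsub>W\<^esub> w)) = int (snd v) \<otimes>\<^bsub>integer_mod_group p\<^esub> int (snd w)"
    by (cases v, cases w) (simp add: mult_W of_nat_mod)
qed

lemma derived_W_elim:
  assumes "w \<in> derived W (carrier W)"
  obtains f where "w = (f, 0)" "f \<in> I \<rightarrow>\<^sub>E carrier B" "desc_prod B f p \<in> derived B (carrier B)"
proof -
  let ?N = "derived B (carrier B)"
  let ?Q = "B Mod ?N"
  interpret N: normal ?N B by (rule derived_self_is_normal)
  have Q: "comm_group ?Q" by (rule derived_quot_is_comm_group)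
  interpret coset: group_hom B ?Q "\<lambda>x. ?N #> x"
    by (intro group_hom.intro group_hom_axioms.intro is_group N.factorgroup_is_group N.r_coset_hom_Mod)
  have comm_Zp: "comm_group (integer_mod_group p)"
    by (rule group.group_comm_groupI) (auto simp: add.commute)
  have hom_on_W: "group_hom W H h" if "group H" "h \<in> hom W H" for H h
    using that by (intro group_hom.intro group_hom_axioms.intro group_W)
  have "w \<in> carrier W" using assms group.derived_in_carrier[OF group_W] by blast
  then obtain f a where w: "w = (f, a)" "f \<in> I \<rightarrow>\<^sub>E carrier B" "a < p"
    by (cases w) auto
  have "int a = 0"
    using group_hom.derived_in_kernel_of_comm_group[OF hom_on_W[OF _ rotation_hom] comm_Zp assms] w
    by simp
  have "?N #> desc_prod B f p = finprod ?Q (\<lambda>i. ?N #> f i) I"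
    using w(2) by (intro coset.desc_prod_hom Q) simp
  also have "\<dots> = \<one>\<^bsub>?Q\<^esub>"
    using group_hom.derived_in_kernel_of_comm_group[OF
        hom_on_W[OF _ finprod_coords_hom[OF Q coset.homh]] Q assms] w
    by (simp add: comm_group.axioms(2)[OF Q])
  finally have "desc_prod B f p \<in> ?N"
    using w(2) by (intro coset_join1[OF _ _ N.subgroup_axioms]) (auto intro: desc_prod_closed)
  then show thesis using that w \<open>int a = 0\<close> by simp
qed

definition embed_0 :: "'a \<Rightarrow> (nat \<Rightarrow> 'a) \<times> nat" where
  "embed_0 b = ((\<lambda>i\<in>I. if i = 0 then b else \<one>), 0)"

lemma embed_0_mult:
  assumes "g \<in> I \<rightarrow>\<^sub>E carrier B" "u \<in> carrier B"
  shows "embed_0 u \<otimes>\<^bsub>W\<^esub> (g, 0) = (g(0 := u \<otimes> g 0), 0)"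
  unfolding embed_0_def mult_W using assms p_pos by (simp add: fun_eq_iff PiE_arb[of g I])

lemma embed_0_hom: "embed_0 \<in> hom B W"
proof (rule homI)
  fix u v assume uv: "u \<in> carrier B" "v \<in> carrier B"
  have "embed_0 u \<otimes>\<^bsub>W\<^esub> embed_0 v = ((\<lambda>i\<in>I. if i = 0 then v else \<one>)(0 := u \<otimes> v), 0)"
    unfolding embed_0_def[of v] using uv p_pos by (subst embed_0_mult) auto
  then show "embed_0 (u \<otimes> v) = embed_0 u \<otimes>\<^bsub>W\<^esub> embed_0 v"
    using p_pos by (auto simp: embed_0_def)
qed (use p_pos in \<open>auto simp: embed_0_def\<close>)

lemma commutator_W_rotation:
  assumes "1 < p" "x \<in> I \<rightarrow>\<^sub>E carrier B" "y \<in> I \<rightarrow>\<^sub>E carrier B"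
  shows "commutator W (x, 0) (y, 1) =
    ((\<lambda>i\<in>I. x i \<otimes> y i \<otimes> inv (x ((i + p - 1) mod p)) \<otimes> inv (y i)), 0)"
proof -
  have "(x, 0) \<otimes>\<^bsub>W\<^esub> (y, 1) = ((\<lambda>i\<in>I. x i \<otimes> y i), 1)"
    unfolding mult_W using assms(1) by (auto intro!: restrict_ext)
  moreover have "inv\<^bsub>W\<^esub> (x, 0) = ((\<lambda>i\<in>I. inv (x i)), 0)"
    using inv_W[OF assms(2)] p_pos by (auto intro!: restrict_ext)
  moreover have "((\<lambda>i\<in>I. x i \<otimes> y i), 1) \<otimes>\<^bsub>W\<^esub> ((\<lambda>i\<in>I. inv (x i)), 0) =
      ((\<lambda>i\<in>I. x i \<otimes> y i \<otimes> inv (x ((i + p - 1) mod p))), 1)"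
    unfolding mult_W using assms(1) by (auto intro!: restrict_ext)
  moreover have "inv\<^bsub>W\<^esub> (y, 1) = ((\<lambda>i\<in>I. inv (y ((i + 1) mod p))), p - 1)"
    using inv_W[OF assms(3)] assms(1) by simp
  moreover have "((\<lambda>i\<in>I. x i \<otimes> y i \<otimes> inv (x ((i + p - 1) mod p))), 1) \<otimes>\<^bsub>W\<^esub>
        ((\<lambda>i\<in>I. inv (y ((i + 1) mod p))), p - 1) =
      ((\<lambda>i\<in>I. x i \<otimes> y i \<otimes> inv (x ((i + p - 1) mod p)) \<otimes> inv (y i)), 0)"
  proof -
    have "Suc ((i + p - Suc 0) mod p) mod p = i" if "i < p" for i
      using add_mod_shift_cancel[OF assms(1) that] by simp
    then show ?thesis unfolding mult_W using assms p_pos by (auto intro!: restrict_ext)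
  qed
  ultimately show ?thesis unfolding commutator_def by simp
qed

lemma commutator_W_of_desc_prod_commutator:
  assumes "1 < p" "f \<in> I \<rightarrow>\<^sub>E carrier B" "t \<in> carrier B" "b \<in> carrier B"
    and prod_f: "desc_prod B f p = commutator B t b"
  shows "\<exists>u v. u \<in> carrier W \<and> v \<in> carrier W \<and> (f, 0) = commutator W u v"
proof -
  let ?q = "commutator B t b"
  have q: "?q \<in> carrier B" using assms by (simp add: commutator_def)
  have partial: "desc_prod B f j \<in> carrier B" if "j \<le> p" for j
    using that assms(2) by (intro desc_prod_closed) simp
  (* x i (x (i - 1))^-1 recovers f i, and the wrap-around x (p - 1) = t produces [t, b] at 0. *)
  define x where "x = (\<lambda>i\<in>I. desc_prod B f (Suc i) \<otimes> inv ?q \<otimes> t)"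
  define y where "y = (\<lambda>i\<in>I. if i = 0 then b else \<one>)"
  have x: "x \<in> I \<rightarrow>\<^sub>E carrier B"
    using partial q assms(3) by (simp add: x_def del: desc_prod.simps(2))
  have y: "y \<in> I \<rightarrow>\<^sub>E carrier B" using assms(4) by (simp add: y_def)
  have x_0: "x 0 = f 0 \<otimes> inv ?q \<otimes> t"
    using p_pos assms(2) by (simp add: x_def)
  have "x (p - 1) = desc_prod B f p \<otimes> inv ?q \<otimes> t"
    using p_pos by (simp add: x_def del: desc_prod.simps(2))
  then have x_last: "x (p - 1) = t"
    using prod_f q assms(3) by simp
  have x_Suc: "x i = f i \<otimes> x (i - 1)" if "0 < i" "i < p" for i
  proof -
    have "i - 1 \<in> I" using that by simp
    then have "x (i - 1) = desc_prod B f i \<otimes> inv ?q \<otimes> t"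
      using that by (simp add: x_def del: desc_prod.simps(2))
    moreover have "x i = f i \<otimes> desc_prod B f i \<otimes> inv ?q \<otimes> t"
      using that by (simp add: x_def)
    ultimately show ?thesis
      using that partial[of i] q assms(2,3) by (simp add: m_assoc)
  qed
  have "(\<lambda>i\<in>I. x i \<otimes> y i \<otimes> inv (x ((i + p - 1) mod p)) \<otimes> inv (y i)) = f"
  proof (rule ext)
    fix i
    consider "i = 0" | "0 < i" "i < p" | "p \<le> i" by linarith
    then show "(\<lambda>i\<in>I. x i \<otimes> y i \<otimes> inv (x ((i + p - 1) mod p)) \<otimes> inv (y i)) i = f i"
    proof cases
      case 1
      have "(0 + p - 1) mod p = p - 1" using p_pos by simp
      moreover have "x 0 \<otimes> y 0 \<otimes> inv (x (p - 1)) \<otimes> inv (y 0) = f 0 \<otimes> inv ?q \<otimes> ?q"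
        using p_pos q assms(2,3,4) unfolding x_0 x_last by (simp add: y_def commutator_def m_assoc)
      ultimately show ?thesis
        using 1 p_pos q assms(2) by (simp add: m_assoc)
    next
      case 2
      then have "(i + p - 1) mod p = i - 1" by (simp add: le_mod_geq)
      moreover have "y i = \<one>" using 2 by (simp add: y_def)
      ultimately have "x i \<otimes> y i \<otimes> inv (x ((i + p - 1) mod p)) \<otimes> inv (y i) =
          f i \<otimes> x (i - 1) \<otimes> \<one> \<otimes> inv (x (i - 1)) \<otimes> inv \<one>"
        unfolding x_Suc[OF 2] by (simp only:)
      also have "\<dots> = f i"
      proof -
        have "x (i - 1) \<in> carrier B" "f i \<in> carrier B"
          using 2 x assms(2) by (auto intro: PiE_coord_closed)
        then show ?thesis by (simp add: m_assoc)
      qed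
      finally show ?thesis using 2 by simp
    qed (use assms(2) in \<open>simp add: PiE_arb[of f I]\<close>)
  qed
  then have "(f, 0) = commutator W (x, 0) (y, 1)"
    using commutator_W_rotation[OF assms(1) x y] by simp
  moreover have "(x, 0) \<in> carrier W" "(y, 1) \<in> carrier W"
    using x y assms(1) by simp_all
  ultimately show ?thesis by blast
qed

lemma comm_prods_W_of_desc_prod:
  assumes "1 < p" "f \<in> I \<rightarrow>\<^sub>E carrier B" "desc_prod B f p \<in> comm_prods B (Suc k)"
  shows "(f, 0) \<in> comm_prods W (Suc k)"
proof -
  let ?E = "desc_prod B f p"
  obtain c t b where
    ctb: "?E = c \<otimes> commutator B t b" "c \<in> comm_prods B k" "t \<in> carrier B" "b \<in> carrier B"
    using assms(3) by auto
  let ?q = "commutator B t b"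
  have q: "?q \<in> carrier B" using ctb by (simp add: commutator_def)
  have c: "c \<in> carrier B" using ctb(2) by (rule comm_prods_carrier)
  have f0: "f 0 \<in> carrier B" using assms(2) p_pos by simp
  have E: "?E \<in> carrier B" using assms(2) by (intro desc_prod_closed) simp
  define f' where "f' = f(0 := f 0 \<otimes> inv ?E \<otimes> ?q)"
  have f': "f' \<in> I \<rightarrow>\<^sub>E carrier B"
    using PiE_fun_upd[OF _ assms(2), of "f 0 \<otimes> inv ?E \<otimes> ?q" 0] p_pos f0 E q
    by (simp add: f'_def insert_absorb)
  have "desc_prod B f' p = ?E \<otimes> inv (f 0) \<otimes> (f 0 \<otimes> inv ?E \<otimes> ?q)"
    unfolding f'_def using assms(2) p_pos f0 E q by (intro desc_prod_update_0) auto
  also have "\<dots> = ?q"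
    using f0 E q by (simp add: m_assoc inv_mult_cancel_left mult_inv_cancel_left)
  finally obtain u v where uv: "u \<in> carrier W" "v \<in> carrier W" "(f', 0) = commutator W u v"
    using commutator_W_of_desc_prod_commutator[OF assms(1) f' ctb(3,4)] by blast
  define L where "L = f 0 \<otimes> inv (f' 0)"
  have "L = (f 0 \<otimes> inv ?q) \<otimes> c \<otimes> inv (f 0 \<otimes> inv ?q)"
    using f0 c q by (simp add: L_def f'_def ctb(1) m_assoc inv_mult_group)
  then have L: "L \<in> comm_prods B k"
    using f0 q ctb(2) by (simp add: comm_prods_conj)
  have "group_hom B W embed_0"
    by (intro group_hom.intro group_hom_axioms.intro is_group group_W embed_0_hom)
  then have embed_L: "embed_0 L \<in> comm_prods W k"
    using L by (rule group_hom.comm_prods_hom)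
  have f'_0: "f' 0 \<in> carrier B" using f' p_pos by simp
  have "embed_0 L \<otimes>\<^bsub>W\<^esub> (f', 0) = (f'(0 := L \<otimes> f' 0), 0)"
    using f' f0 f'_0 by (intro embed_0_mult) (simp_all add: L_def)
  also have "f'(0 := L \<otimes> f' 0) = f"
    using f0 f'_0 by (simp add: L_def f'_def m_assoc)
  finally have "(f, 0) = embed_0 L \<otimes>\<^bsub>W\<^esub> commutator W u v"
    using uv(3) by simp
  then show ?thesis
    unfolding comm_prods.simps(2) using embed_L uv(1,2) by blast
qed

end

theorem mainTheorem5:
  fixes B :: "('a, 'b) monoid_scheme" and p :: nat
  assumes "group B" and "p \<ge> 2"
  shows "comm_width (wreath_cyclic B p) \<le> max 1 (comm_width B)"
proof -
  interpret cyclic_wreath B p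
    using assms by (intro cyclic_wreath.intro cyclic_wreath_axioms.intro) auto
  show ?thesis
  proof (cases "comm_width B")
    case infinity
    then show ?thesis by simp
  next
    case (enat n)
    have "comm_width W \<le> enat (Suc (n - 1))"
    proof (rule comm_width_le)
      fix g assume "g \<in> derived W (carrier W)"
      then obtain f where g: "g = (f, 0)" "f \<in> I \<rightarrow>\<^sub>E carrier B"
        and "desc_prod B f p \<in> derived B (carrier B)"
        by (rule derived_W_elim)
      then have "desc_prod B f p \<in> comm_prods B (Suc (n - 1))"
        using enat by (intro comm_prods_of_comm_width_le) auto
      then show "g \<in> comm_prods W (Suc (n - 1))"
        unfolding g(1) using g(2) assms(2)
        by (auto intro: comm_prods_W_of_desc_prod simp del: comm_prods.simps(2))
    qed
    moreover have "enat (Suc (n - 1)) = max 1 (comm_width B)"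
      using enat by (simp add: one_enat_def max_def)
    ultimately show ?thesis by simp
  qed
qed

end
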